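(* Let $R$ be a ring such that $2$ is not invertible in $R$. Then $R$ is a GSWNC ring if and only if $R$ is a GSNC ring or $R$ is a strongly weakly nil-clean ring.
   Context: All rings are associative with identity. An element $a$ of a ring is strongly nil-clean if $a = e + q$ with $e$ idempotent, $q$ nilpotent and $eq = qe$; it is strongly weakly nil-clean if there exist an idempotent $e$ and a nilpotent $q$ with $eq = qe$ such that $a = q + e$ or $a = q - e$. A ring is strongly weakly nil-clean if all its elements are strongly weakly nil-clean; it is GSNC if every non-invertible element is strongly nil-clean, and GSWNC if every non-invertible element is strongly weakly nil-clean. *)

theory Defs
  imports Main
begin

definition idem :: "'a::ring_1 \<Rightarrow> bool" where
  "idem e \<longleftrightarrow> e * e = e"

definition nilp :: "'a::ring_1 \<Rightarrow> bool" where
  "nilp q \<longleftrightarrow> (\<exists>n::nat. q ^ n = 0)"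

definition invertible_elem :: "'a::ring_1 \<Rightarrow> bool" where
  "invertible_elem a \<longleftrightarrow> (\<exists>b. a * b = 1 \<and> b * a = 1)"

definition strongly_nil_clean_elem :: "'a::ring_1 \<Rightarrow> bool" where
  "strongly_nil_clean_elem a \<longleftrightarrow>
     (\<exists>e q. idem e \<and> nilp q \<and> e * q = q * e \<and> a = e + q)"

definition strongly_weakly_nil_clean_elem :: "'a::ring_1 \<Rightarrow> bool" where
  "strongly_weakly_nil_clean_elem a \<longleftrightarrow>
     (\<exists>e q. idem e \<and> nilp q \<and> e * q = q * e \<and> (a = q + e \<or> a = q - e))"

definition SWNC_ring :: "'a::ring_1 itself \<Rightarrow> bool" where
  "SWNC_ring _ \<longleftrightarrow> (\<forall>a::'a. strongly_weakly_nil_clean_elem a)"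

definition GSNC_ring :: "'a::ring_1 itself \<Rightarrow> bool" where
  "GSNC_ring _ \<longleftrightarrow> (\<forall>a::'a. \<not> invertible_elem a \<longrightarrow> strongly_nil_clean_elem a)"

definition GSWNC_ring :: "'a::ring_1 itself \<Rightarrow> bool" where
  "GSWNC_ring _ \<longleftrightarrow> (\<forall>a::'a. \<not> invertible_elem a \<longrightarrow> strongly_weakly_nil_clean_elem a)"

end

theory Submission
  imports Defs
begin

text \<open>
  If 2 is nilpotent, \<open>q - e = (q - 2e) + e\<close> turns every strongly weakly nil-clean
  decomposition into a strongly nil-clean one. Otherwise decompose the non-unit 2 itself as
  \<open>q \<plusminus> e\<close>: the sign \<open>+\<close> forces \<open>e q = e\<close>, hence \<open>e = 0\<close> and 2 nilpotent, so \<open>q = 2 + e\<close>.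
  Then \<open>e\<close> and \<open>1 - e\<close> are multiplied by \<open>q\<close> as by 3 and 2, so \<open>q\<^sup>N = 0\<close> gives
  \<open>3\<^sup>N e = 0 = 2\<^sup>N (1 - e)\<close>; by Bezout \<open>e\<close> is an integer multiple of \<open>2\<^sup>N\<close>, hence
  central, and \<open>e \<noteq> 0, 1\<close> since 2 is neither nilpotent nor a unit. For any \<open>a\<close>, the
  non-units \<open>e a\<close> and \<open>(1 - e) a\<close> decompose inside the corners \<open>eR\<close> and \<open>(1 - e)R\<close>. In
  \<open>(1 - e)R\<close> the element 2 is nilpotent, so the sign there can be chosen to match the one
  in \<open>eR\<close>, and the orthogonal corner decompositions add up to one of \<open>a\<close>.
\<close>

lemma power_eq_0_mono:
  fixes x :: "'a::semiring_1"
  assumes "x ^ m = 0" and "m \<le> n"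
  shows "x ^ n = 0"
proof -
  have "x ^ n = x ^ m * x ^ (n - m)"
    using \<open>m \<le> n\<close> by (simp flip: power_add)
  with assms(1) show ?thesis by simp
qed

lemma power_mult_distrib_commuting:
  fixes x y :: "'a::monoid_mult"
  assumes "x * y = y * x"
  shows "(x * y) ^ n = x ^ n * y ^ n"
proof (induction n)
  case (Suc n)
  have "y ^ n * x = x * y ^ n"
    using power_commuting_commutes[of y x n] assms by simp
  have "(x * y) ^ Suc n = x ^ n * (y ^ n * x) * y"
    by (simp only: power_Suc2 Suc.IH mult.assoc)
  also have "\<dots> = x ^ n * (x * y ^ n) * y"
    by (simp only: \<open>y ^ n * x = x * y ^ n\<close>)
  also have "\<dots> = x ^ Suc n * y ^ Suc n"
    by (simp only: power_Suc2 mult.assoc)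
  finally show ?case .
qed simp

lemma commuting_power_sandwich_eq_0:
  fixes x y :: "'a::semiring_1"
  assumes xy: "x * y = y * x" and x: "x ^ a = 0" and y: "y ^ b = 0"
    and "a + b \<le> i + n + j + 1"
  shows "x ^ i * (x + y) ^ n * y ^ j = 0"
  using assms(4)
proof (induction n arbitrary: i j)
  case 0
  then have "a \<le> i \<or> b \<le> j" by arith
  then show ?case
    using power_eq_0_mono[OF x] power_eq_0_mono[OF y] by auto
next
  case (Suc n)
  have "(x + y) ^ n * x = x * (x + y) ^ n"
    using power_commuting_commutes[of "x + y" x n] xy by (simp add: algebra_simps)
  have "x ^ i * (x + y) ^ Suc n * y ^ j
      = x ^ i * ((x + y) ^ n * x) * y ^ j + x ^ i * (x + y) ^ n * (y * y ^ j)"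
    by (simp only: power_Suc2 distrib_left distrib_right mult.assoc)
  also have "\<dots> = x ^ i * (x * (x + y) ^ n) * y ^ j + x ^ i * (x + y) ^ n * (y * y ^ j)"
    by (simp only: \<open>(x + y) ^ n * x = x * (x + y) ^ n\<close>)
  also have "\<dots> = x ^ Suc i * (x + y) ^ n * y ^ j + x ^ i * (x + y) ^ n * y ^ Suc j"
    by (simp only: mult.assoc power_Suc2[of x i] power_Suc[of y j])
  also have "\<dots> = 0"
    using Suc.IH[of "Suc i" j] Suc.IH[of i "Suc j"] Suc.prems by simp
  finally show ?case .
qed

lemma nilp_add_commuting:
  fixes x y :: "'a::ring_1"
  assumes "x * y = y * x" and "nilp x" and "nilp y"
  shows "nilp (x + y)"
proof -
  obtain a b where "x ^ a = 0" and "y ^ b = 0"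
    using assms(2,3) unfolding nilp_def by blast
  then have "x ^ 0 * (x + y) ^ (a + b) * y ^ 0 = 0"
    using commuting_power_sandwich_eq_0[OF assms(1), of a b 0 "a + b" 0] by simp
  then show ?thesis
    unfolding nilp_def by auto
qed

lemma nilp_uminus:
  fixes x :: "'a::ring_1"
  assumes "nilp x"
  shows "nilp (- x)"
proof -
  obtain n where "x ^ n = 0"
    using assms unfolding nilp_def by blast
  then have "(- x) ^ n = 0"
    by (simp add: power_minus[of x n] del: power_minus)
  then show ?thesis
    unfolding nilp_def by blast
qed

lemma nilp_mult_commuting:
  fixes x y :: "'a::ring_1"
  assumes "x * y = y * x" and "nilp y"
  shows "nilp (x * y)"
  using assms unfolding nilp_def by (metis mult_zero_right power_mult_distrib_commuting)

lemma nilp_diff_commuting: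
  fixes x y :: "'a::ring_1"
  assumes "x * y = y * x" and "nilp x" and "nilp y"
  shows "nilp (x - y)"
  using nilp_add_commuting[of x "- y"] nilp_uminus[of y] assms by simp

lemma nilp_right_fixed_eq_0:
  fixes x q :: "'a::ring_1"
  assumes "nilp q" and "x * q = x"
  shows "x = 0"
proof -
  obtain n where "q ^ n = 0"
    using assms(1) unfolding nilp_def by blast
  moreover have "x * q ^ k = x" for k
    by (induction k) (simp_all add: power_Suc2 mult.assoc[symmetric] assms(2))
  ultimately show ?thesis
    by (metis mult_zero_right)
qed

lemma mult_power_eigen:
  fixes x q c :: "'a::monoid_mult"
  assumes "x * q = c * x"
  shows "x * q ^ k = c ^ k * x"
proof (induction k)
  case (Suc k)
  have "x * q ^ Suc k = c ^ k * (x * q)"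
    by (simp only: power_Suc2 Suc.IH mult.assoc[symmetric])
  then show ?case
    by (simp only: assms power_Suc2 mult.assoc)
qed simp

lemma of_int_multiple_if_coprime_annihilators:
  fixes e :: "'a::ring_1"
  assumes "of_int m * e = 0" and "of_int n * (1 - e) = 0" and "coprime m n"
  obtains v where "e = of_int (v * n)"
proof -
  obtain u v where "u * m + v * n = 1"
    using bezout_int[of m n] \<open>coprime m n\<close> by (metis coprime_iff_gcd_eq_1)
  then have "e = (of_int u * of_int m + of_int v * of_int n) * e"
    by (metis mult_1 of_int_1 of_int_add of_int_mult)
  also have "\<dots> = of_int v * of_int n - of_int v * (of_int n * (1 - e))"
    using assms(1) by (simp add: algebra_simps)
  also have "\<dots> = of_int (v * n)"
    using assms(2) by simp
  finally show ?thesis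
    using that by blast
qed

definition nil_clean_pair :: "'a::ring_1 \<Rightarrow> 'a \<Rightarrow> bool" where
  "nil_clean_pair e q \<longleftrightarrow> idem e \<and> nilp q \<and> e * q = q * e"

definition central :: "'a::ring_1 \<Rightarrow> bool" where
  "central p \<longleftrightarrow> (\<forall>z. p * z = z * p)"

lemma strongly_weakly_nil_clean_elem_iff:
  "strongly_weakly_nil_clean_elem a \<longleftrightarrow> (\<exists>e q. nil_clean_pair e q \<and> (a = q + e \<or> a = q - e))"
  unfolding strongly_weakly_nil_clean_elem_def nil_clean_pair_def by blast

lemma strongly_nil_clean_elem_iff:
  "strongly_nil_clean_elem a \<longleftrightarrow> (\<exists>e q. nil_clean_pair e q \<and> a = q + e)"
  unfolding strongly_nil_clean_elem_def nil_clean_pair_def by (metis add.commute)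

lemma strongly_weakly_nil_clean_if_strongly_nil_clean:
  "strongly_nil_clean_elem a \<Longrightarrow> strongly_weakly_nil_clean_elem a"
  unfolding strongly_nil_clean_elem_iff strongly_weakly_nil_clean_elem_iff by blast

lemma nil_clean_pair_shift:
  assumes "nil_clean_pair e q" and "nilp (2 * e)"
  shows "nil_clean_pair e (q - 2 * e)" and "nil_clean_pair e (q + 2 * e)"
proof -
  have q: "nilp q" and eq: "e * q = q * e"
    using assms(1) unfolding nil_clean_pair_def by auto
  then have "q * (2 * e) = (2 * e) * q"
    by (simp add: mult_2 algebra_simps)
  then have "nilp (q - 2 * e)" and "nilp (q + 2 * e)"
    using q assms(2) by (simp_all add: nilp_diff_commuting nilp_add_commuting)
  moreover have "e * (q - 2 * e) = (q - 2 * e) * e" and "e * (q + 2 * e) = (q + 2 * e) * e"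
    using eq by (simp_all add: mult_2 algebra_simps)
  ultimately show "nil_clean_pair e (q - 2 * e)" and "nil_clean_pair e (q + 2 * e)"
    using assms(1) unfolding nil_clean_pair_def by auto
qed

lemma strongly_nil_clean_if_nilp_two:
  fixes a :: "'a::ring_1"
  assumes "nilp (2::'a)" and "strongly_weakly_nil_clean_elem a"
  shows "strongly_nil_clean_elem a"
proof -
  obtain e q where eq: "nil_clean_pair e q" and a: "a = q + e \<or> a = q - e"
    using assms(2) unfolding strongly_weakly_nil_clean_elem_iff by blast
  have "nilp (e * 2)"
    using nilp_mult_commuting[of e 2] assms(1) by (simp add: mult_2 mult_2_right)
  then have "nil_clean_pair e (q - 2 * e)"
    using nil_clean_pair_shift(1)[OF eq] by (simp add: mult_2 mult_2_right)
  moreover have "q - e = (q - 2 * e) + e"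
    by (simp add: mult_2)
  ultimately show ?thesis
    using eq a unfolding strongly_nil_clean_elem_iff by metis
qed

lemma idem_one_minus: "idem e \<Longrightarrow> idem (1 - e)"
  unfolding idem_def by (simp add: algebra_simps)

lemma central_one_minus: "central p \<Longrightarrow> central (1 - p)"
  unfolding central_def by (simp add: algebra_simps)

lemma central_idem_corners_orthogonal:
  assumes "idem p" and "central p" and "p * x = x" and "(1 - p) * y = y"
  shows "x * y = 0" and "y * x = 0"
proof -
  have pp: "p * (1 - p) = 0" "(1 - p) * p = 0"
    using assms(1) unfolding idem_def by (simp_all add: algebra_simps)
  have py: "y * p = p * y" and xp: "x * p = x"
    using assms(2,3) unfolding central_def by metis+
  have "x * y = (x * p) * ((1 - p) * y)"
    using xp assms(4) by simp
  also have "\<dots> = x * (p * (1 - p)) * y"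
    by (simp only: mult.assoc)
  finally show "x * y = 0"
    using pp by simp
  have "y * x = ((1 - p) * y) * (p * x)"
    using assms(3,4) by simp
  also have "\<dots> = (1 - p) * (y * p) * x"
    by (simp only: mult.assoc)
  also have "\<dots> = ((1 - p) * p) * y * x"
    by (simp only: py mult.assoc)
  finally show "y * x = 0"
    using pp by simp
qed

lemma not_invertible_central_idem_mult:
  assumes "idem p" and "central p" and "p \<noteq> 1"
  shows "\<not> invertible_elem (p * a)"
proof
  assume "invertible_elem (p * a)"
  then obtain b where "b * (p * a) = 1"
    unfolding invertible_elem_def by blast
  then have "1 - p = b * (p * a) * (1 - p)"
    by simp
  also have "\<dots> = b * a * (p * (1 - p))"
    using assms(2) unfolding central_def by (simp add: mult.assoc)
  also have "\<dots> = 0"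
    using assms(1) unfolding idem_def by (simp add: algebra_simps)
  finally show False
    using assms(3) by simp
qed

lemma nil_clean_pair_central_idem_mult:
  assumes "idem p" and "central p" and "nil_clean_pair e q"
  shows "nil_clean_pair (p * e) (p * q)"
proof -
  have pz: "p * z = z * p" for z
    using assms(2) unfolding central_def by blast
  have "idem (p * e)"
    using assms(1,3) unfolding idem_def nil_clean_pair_def
    by (metis mult.assoc pz)
  moreover have "nilp (p * q)"
    using assms(3) nilp_mult_commuting[of p q] pz unfolding nil_clean_pair_def by blast
  moreover have "(p * e) * (p * q) = (p * q) * (p * e)"
    using assms(3) unfolding nil_clean_pair_def by (metis mult.assoc pz)
  ultimately show ?thesis
    unfolding nil_clean_pair_def by blast
qed

lemma nil_clean_pair_add_orthogonal:
  assumes "idem p" and "central p"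
    and "nil_clean_pair e1 q1" and "p * e1 = e1" and "p * q1 = q1"
    and "nil_clean_pair e2 q2" and "(1 - p) * e2 = e2" and "(1 - p) * q2 = q2"
  shows "nil_clean_pair (e1 + e2) (q1 + q2)"
proof -
  note orth = central_idem_corners_orthogonal[OF assms(1,2)]
  have "e1 * e2 = 0" "e2 * e1 = 0" "q1 * q2 = 0" "q2 * q1 = 0"
    "e1 * q2 = 0" "q2 * e1 = 0" "q1 * e2 = 0" "e2 * q1 = 0"
    using orth assms(4,5,7,8) by metis+
  with assms(3,6) show ?thesis
    using nilp_add_commuting[of q1 q2]
    unfolding nil_clean_pair_def idem_def by (simp add: algebra_simps)
qed

lemma strongly_weakly_nil_clean_in_corner:
  assumes "idem p" and "central p" and "p * x = x" and "strongly_weakly_nil_clean_elem x"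
  obtains e q where "nil_clean_pair e q" and "p * e = e" and "p * q = q"
    and "x = q + e \<or> x = q - e"
proof -
  obtain e q where "nil_clean_pair e q" and x: "x = q + e \<or> x = q - e"
    using assms(4) unfolding strongly_weakly_nil_clean_elem_iff by blast
  then have "nil_clean_pair (p * e) (p * q)"
    using nil_clean_pair_central_idem_mult assms(1,2) by blast
  moreover have "p * (p * e) = p * e" and "p * (p * q) = p * q"
    using assms(1) unfolding idem_def by (simp_all flip: mult.assoc)
  moreover have "x = p * q + p * e \<or> x = p * q - p * e"
    using x assms(3) by (metis distrib_left right_diff_distrib)
  ultimately show ?thesis
    using that by blast
qed

lemma corner_nil_clean_pair_sign_change:
  assumes "central p" and "nilp (2 * p)"
    and "nil_clean_pair e q" and "p * e = e" and "p * q = q"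
    and x: "x = q + e \<or> x = q - e"
  shows "\<exists>q'. nil_clean_pair e q' \<and> p * q' = q' \<and> x = q' + e"
    and "\<exists>q'. nil_clean_pair e q' \<and> p * q' = q' \<and> x = q' - e"
proof -
  have "p * e = e * p"
    using assms(1) unfolding central_def by blast
  then have "e * (2 * p) = (2 * p) * e"
    by (simp add: mult_2 algebra_simps)
  then have "nilp (e * (2 * p))"
    using nilp_mult_commuting assms(2) by blast
  moreover have "e * (2 * p) = 2 * e"
    using \<open>e * (2 * p) = (2 * p) * e\<close> assms(4) by (simp add: mult.assoc)
  ultimately have "nil_clean_pair e (q - 2 * e)" and "nil_clean_pair e (q + 2 * e)"
    using nil_clean_pair_shift assms(3) by simp_all
  moreover have "p * (q - 2 * e) = q - 2 * e" and "p * (q + 2 * e) = q + 2 * e"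
    using assms(4,5) by (simp_all add: algebra_simps mult_2)
  moreover have "q - e = (q - 2 * e) + e" and "q + e = (q + 2 * e) - e"
    by (simp_all add: mult_2)
  ultimately show "\<exists>q'. nil_clean_pair e q' \<and> p * q' = q' \<and> x = q' + e"
    and "\<exists>q'. nil_clean_pair e q' \<and> p * q' = q' \<and> x = q' - e"
    using x assms(3,5) by auto
qed

lemma strongly_weakly_nil_clean_if_central_idem_split:
  fixes a p :: "'a::ring_1"
  assumes "GSWNC_ring TYPE('a)" and p: "idem p" "central p" and "p \<noteq> 0" and "p \<noteq> 1"
    and "nilp (2 * p)"
  shows "strongly_weakly_nil_clean_elem a"
proof -
  have p': "idem (1 - p)" "central (1 - p)"
    using p idem_one_minus central_one_minus by blast+
  have "\<not> invertible_elem (p * a)" and "\<not> invertible_elem ((1 - p) * a)"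
    using not_invertible_central_idem_mult[OF p] not_invertible_central_idem_mult[OF p']
      \<open>p \<noteq> 0\<close> \<open>p \<noteq> 1\<close> by auto
  then have swnc: "strongly_weakly_nil_clean_elem (p * a)"
    "strongly_weakly_nil_clean_elem ((1 - p) * a)"
    using assms(1) unfolding GSWNC_ring_def by blast+
  have "p * (p * a) = p * a" and "(1 - p) * ((1 - p) * a) = (1 - p) * a"
    using p(1) p'(1) unfolding idem_def by (simp_all flip: mult.assoc)
  then obtain e1 q1 e2 q2 where
    pair1: "nil_clean_pair e1 q1" "(1 - p) * e1 = e1" "(1 - p) * q1 = q1"
      and sign1: "(1 - p) * a = q1 + e1 \<or> (1 - p) * a = q1 - e1"
      and pair2: "nil_clean_pair e2 q2" "p * e2 = e2" "p * q2 = q2"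
      and sign2: "p * a = q2 + e2 \<or> p * a = q2 - e2"
    using strongly_weakly_nil_clean_in_corner p p' swnc by metis
  note change_sign = corner_nil_clean_pair_sign_change[OF p(2) \<open>nilp (2 * p)\<close> pair2 sign2]
  note add_pairs = nil_clean_pair_add_orthogonal[OF p _ pair2(2) _ pair1]
  have a: "a = p * a + (1 - p) * a"
    by (simp add: algebra_simps)
  from sign1 show ?thesis
  proof
    assume "(1 - p) * a = q1 + e1"
    moreover obtain q where "nil_clean_pair e2 q" "p * q = q" "p * a = q + e2"
      using change_sign(1) by blast
    ultimately have "a = (q + q1) + (e2 + e1)" and "nil_clean_pair (e2 + e1) (q + q1)"
      using a add_pairs by (simp add: algebra_simps, blast)
    then show ?thesis
      unfolding strongly_weakly_nil_clean_elem_iff by blast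
  next
    assume "(1 - p) * a = q1 - e1"
    moreover obtain q where "nil_clean_pair e2 q" "p * q = q" "p * a = q - e2"
      using change_sign(2) by blast
    ultimately have "a = (q + q1) - (e2 + e1)" and "nil_clean_pair (e2 + e1) (q + q1)"
      using a add_pairs by (simp add: algebra_simps, blast)
    then show ?thesis
      unfolding strongly_weakly_nil_clean_elem_iff by blast
  qed
qed

lemma central_idem_if_nilp_two_plus:
  fixes e :: "'a::ring_1"
  assumes "idem e" and "nilp (2 + e)" and "\<not> invertible_elem (2::'a)"
  shows "central e" and "e \<noteq> 1" and "nilp (2 * (1 - e))"
proof -
  obtain m where "(2 + e) ^ m = 0"
    using assms(2) unfolding nilp_def by blast
  then have q: "(2 + e) ^ Suc m = 0"
    by simp
  have ee: "e * e = e"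
    using assms(1) unfolding idem_def .
  have "(3::'a) * e = 2 * e + e"
    by (metis distrib_right mult_1 numeral_plus_one semiring_norm(5))
  then have e: "e * (2 + e) = 3 * e"
    using ee by (simp add: distrib_left mult_2 mult_2_right)
  have e': "(1 - e) * (2 + e) = 2 * (1 - e)"
    using ee by (simp add: algebra_simps mult_2 mult_2_right)
  have "of_int (3 ^ Suc m) * e = 0"
    using mult_power_eigen[OF e, of "Suc m"] q by simp
  moreover have "of_int (2 ^ Suc m) * (1 - e) = 0"
    using mult_power_eigen[OF e', of "Suc m"] q by simp
  moreover have "coprime (3 ^ Suc m :: int) (2 ^ Suc m)"
    by simp
  ultimately obtain v where v: "e = of_int (v * 2 ^ Suc m)"
    by (rule of_int_multiple_if_coprime_annihilators)
  then show "central e"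
    using mult_of_int_commute unfolding central_def by blast
  show "e \<noteq> 1"
  proof
    assume "e = 1"
    moreover have "v * 2 ^ Suc m = 2 * (v * 2 ^ m)"
      by simp
    ultimately have "2 * of_int (v * 2 ^ m) = (1::'a)"
      using v by (metis of_int_mult of_int_numeral)
    moreover from this have "of_int (v * 2 ^ m) * 2 = (1::'a)"
      by (metis mult_of_int_commute)
    ultimately show False
      using assms(3) unfolding invertible_elem_def by blast
  qed
  have "(1 - e) * (2 + e) = (2 + e) * (1 - e)"
    by (simp add: algebra_simps mult_2 mult_2_right)
  then show "nilp (2 * (1 - e))"
    using nilp_mult_commuting[of "1 - e" "2 + e"] assms(2) e' by simp
qed

lemma SWNC_ring_if_GSWNC_ring_not_nilp_two:
  assumes "GSWNC_ring TYPE('a::ring_1)" and "\<not> invertible_elem (2::'a)" and "\<not> nilp (2::'a)"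
  shows "SWNC_ring TYPE('a)"
proof -
  obtain e q :: 'a where pair: "nil_clean_pair e q" and two: "2 = q + e \<or> 2 = q - e"
    using assms(1,2) unfolding GSWNC_ring_def strongly_weakly_nil_clean_elem_iff by blast
  have e: "idem e" "e * e = e" and q: "nilp q"
    using pair unfolding nil_clean_pair_def idem_def by auto
  have "e \<noteq> 0"
  proof
    assume "e = 0"
    then have "q = 2"
      using two by simp
    then show False
      using q assms(3) by simp
  qed
  have "2 \<noteq> q + e"
  proof
    assume "2 = q + e"
    then have "q = 2 - e"
      by (simp add: eq_diff_eq)
    then have "e * q = e"
      using e(2) by (simp add: right_diff_distrib mult_2_right)
    then show False
      using nilp_right_fixed_eq_0[OF q] \<open>e \<noteq> 0\<close> by blast
  qed
  then have "nilp (2 + e)"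
    using two q by (auto simp: eq_diff_eq)
  then have "central e" and "e \<noteq> 1" and "nilp (2 * (1 - e))"
    using central_idem_if_nilp_two_plus[OF e(1) _ assms(2)] by simp_all
  moreover have "1 - e \<noteq> 0" and "1 - e \<noteq> 1"
    using \<open>e \<noteq> 1\<close> \<open>e \<noteq> 0\<close> by simp_all
  ultimately show ?thesis
    using strongly_weakly_nil_clean_if_central_idem_split[OF assms(1) idem_one_minus[OF e(1)]
        central_one_minus]
    unfolding SWNC_ring_def by blast
qed

theorem lemma2p56:
  assumes "\<not> invertible_elem (2::'a::ring_1)"
  shows "GSWNC_ring TYPE('a) \<longleftrightarrow> (GSNC_ring TYPE('a) \<or> SWNC_ring TYPE('a))"
proof
  assume GSWNC: "GSWNC_ring TYPE('a)"
  show "GSNC_ring TYPE('a) \<or> SWNC_ring TYPE('a)"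
  proof (cases "nilp (2::'a)")
    case True
    then have "GSNC_ring TYPE('a)"
      using GSWNC strongly_nil_clean_if_nilp_two unfolding GSNC_ring_def GSWNC_ring_def by blast
    then show ?thesis ..
  next
    case False
    then have "SWNC_ring TYPE('a)"
      by (rule SWNC_ring_if_GSWNC_ring_not_nilp_two[OF GSWNC assms])
    then show ?thesis ..
  qed
next
  assume "GSNC_ring TYPE('a) \<or> SWNC_ring TYPE('a)"
  then show "GSWNC_ring TYPE('a)"
    using strongly_weakly_nil_clean_if_strongly_nil_clean
    unfolding GSNC_ring_def SWNC_ring_def GSWNC_ring_def by blast
qed

end
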